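(* Let $M$ be a manifold, $M_0=\emptyset$, and $X=S^{2l}$ an even-dimensional sphere with $l\ge1$. Let $C=C(M,\emptyset;S^{2l})$ and $V=\bigvee_{k\ge1}D_k$. Then the maps $\Phi,\Psi:V\to\mathrm{SP}(V\wedge V)$ are based homotopic.
   Context: $C(M,M_0;X)$ (for a based space $(X,x_0)$) is the space of finite labelled configurations $\xi_I=\{(m_i,x_i)\}_{i\in I}$ ($m_i\in M$ pairwise distinct, $x_i\in X$) modulo the relation generated by $\xi_I\sim\xi_I\cup\{(m,x)\}$ whenever $m\in M_0$ or $x=x_0$; $\xi_J=\{(m_i,x_i)\}_{i\in J}$ for $J\subseteq I$. $C_k$ is the subspace of configurations of at most $k$ points, $D_k=C_k/C_{k-1}$ based at the collapsed point $\infty$, and $V=\bigvee_{k\ge1}D_k$. For a based space $(Y,e)$, $\mathrm{SP}(Y)$ is the free unital abelian monoid on $Y$ with identity $e$, based at $e$. The maps are $\Phi(\xi_I)=\sum_{I=A\sqcup B}(\xi_A,\xi_B)$ (sum over ordered decompositions of $I$ into disjoint subsets $A,B$) and $\Psi(\xi_I)=\sum_{A,B\subseteq I,\ A\cup B=I}(\xi_A,\xi_B)$, where $(\xi_A,\xi_B)\in D_{|A|}\wedge D_{|B|}\subseteq V\wedge V$. *)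

theory Defs
  imports "HOL-Analysis.Analysis" "HOL-Library.Multiset"
begin

definition quotient_topology :: "'a topology \<Rightarrow> ('a \<Rightarrow> 'b) \<Rightarrow> 'b topology" where
  "quotient_topology T q =
     topology (\<lambda>U. U \<subseteq> q ` topspace T \<and> openin T {x \<in> topspace T. q x \<in> U})"

definition topological_manifold :: "'m topology \<Rightarrow> nat \<Rightarrow> bool" where
  "topological_manifold M n \<longleftrightarrow>
     Hausdorff_space M \<and> second_countable M \<and>
     (\<forall>p \<in> topspace M. \<exists>U W. openin M U \<and> p \<in> U \<and> openin (Euclidean_space n) W \<and>
         subtopology M U homeomorphic_space subtopology (Euclidean_space n) W)"

text \<open>Disjoint union over k of the spaces of k-tuples of labelled points with pairwise
  distinct positions: a point (k, f) stands for the tuple f 0, ..., f (k-1).\<close>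
definition labelled_tuples :: "'m topology \<Rightarrow> 'x topology \<Rightarrow> (nat \<times> (nat \<Rightarrow> 'm \<times> 'x)) topology" where
  "labelled_tuples M X =
     subtopology (sum_topology (\<lambda>k. product_topology (\<lambda>i. prod_topology M X) {..<k}) UNIV)
       {(k, f). inj_on (fst \<circ> f) {..<k}}"

text \<open>Reduced representative of the configuration (M_0 empty): drop points labelled x0.\<close>
definition conf_of :: "'x \<Rightarrow> nat \<times> (nat \<Rightarrow> 'm \<times> 'x) \<Rightarrow> ('m \<times> 'x) set" where
  "conf_of x0 = (\<lambda>(k, f). {f i | i. i < k \<and> snd (f i) \<noteq> x0})"

definition conf_space :: "'m topology \<Rightarrow> 'x topology \<Rightarrow> 'x \<Rightarrow> ('m \<times> 'x) set topology" where
  "conf_space M X x0 = quotient_topology (labelled_tuples M X) (conf_of x0)"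

definition conf_filt :: "'m topology \<Rightarrow> 'x topology \<Rightarrow> 'x \<Rightarrow> nat \<Rightarrow> ('m \<times> 'x) set topology" where
  "conf_filt M X x0 k = subtopology (conf_space M X x0) {\<xi> \<in> topspace (conf_space M X x0). card \<xi> \<le> k}"

text \<open>D_k = C_k / C_(k-1); the collapsed point is None, a configuration of exactly k points is Some.\<close>
definition conf_quot :: "'m topology \<Rightarrow> 'x topology \<Rightarrow> 'x \<Rightarrow> nat \<Rightarrow> ('m \<times> 'x) set option topology" where
  "conf_quot M X x0 k =
     quotient_topology (conf_filt M X x0 k) (\<lambda>\<xi>. if card \<xi> = k then Some \<xi> else None)"

text \<open>V = wedge over k \<ge> 1 of D_k (base points, all None, identified).\<close>
definition wedge_V :: "'m topology \<Rightarrow> 'x topology \<Rightarrow> 'x \<Rightarrow> ('m \<times> 'x) set option topology" where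
  "wedge_V M X x0 = quotient_topology (sum_topology (conf_quot M X x0) {1..}) snd"

definition smash_map :: "'a option \<times> 'b option \<Rightarrow> ('a \<times> 'b) option" where
  "smash_map = (\<lambda>(a, b). case a of None \<Rightarrow> None
                   | Some a' \<Rightarrow> (case b of None \<Rightarrow> None | Some b' \<Rightarrow> Some (a', b')))"

definition smash :: "'a option topology \<Rightarrow> 'b option topology \<Rightarrow> ('a \<times> 'b) option topology" where
  "smash Y Z = quotient_topology (prod_topology Y Z) smash_map"

text \<open>Infinite symmetric product SP(Y) of the based space (Y, e): finite multisets of
  non-base points (the base point is the identity), with the colimit (identification)
  topology coming from the spaces Y^n.\<close>
definition SP :: "'a topology \<Rightarrow> 'a \<Rightarrow> 'a multiset topology" where
  "SP Y e = quotient_topology (sum_topology (\<lambda>n. product_topology (\<lambda>i. Y) {..<n}) UNIV)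
              (\<lambda>(n, f). mset (filter (\<lambda>y. y \<noteq> e) (map f [0..<n])))"

text \<open>The maps Phi and Psi (terms with an empty part lie in D_0, not in V, so they are
  base points of V smash V, i.e. identities in SP).\<close>
definition Phi_map :: "('m \<times> 'x) set option \<Rightarrow> (('m \<times> 'x) set \<times> ('m \<times> 'x) set) option multiset" where
  "Phi_map v = (case v of None \<Rightarrow> {#}
     | Some \<xi> \<Rightarrow> mset_set (Some ` {(A, B). A \<union> B = \<xi> \<and> A \<inter> B = {} \<and> A \<noteq> {} \<and> B \<noteq> {}}))"

definition Psi_map :: "('m \<times> 'x) set option \<Rightarrow> (('m \<times> 'x) set \<times> ('m \<times> 'x) set) option multiset" where
  "Psi_map v = (case v of None \<Rightarrow> {#}
     | Some \<xi> \<Rightarrow> mset_set (Some ` {(A, B). A \<union> B = \<xi> \<and> A \<noteq> {} \<and> B \<noteq> {}}))"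

end

theory Submission
  imports Defs
begin

text \<open>The closed hemispheres of \<open>S\<^sup>d\<close> centred at \<open>x0\<close> and at \<open>-x0\<close> cover the sphere, and for
  \<open>d \<ge> 1\<close> each of them can be pushed onto \<open>x0\<close> by a homotopy of the identity: \<open>\<alpha>\<^sub>t\<close>, which fixes
  \<open>x0\<close>, contracts the first one, and \<open>\<beta>\<^sub>t\<close> contracts the second one onto \<open>-x0\<close> and then rotates
  \<open>-x0\<close> to \<open>x0\<close>. In each term \<open>(\<xi>\<^sub>A, \<xi>\<^sub>B)\<close> of \<open>\<Psi>(\<xi>)\<close> move the labels of the points of
  \<open>A \<inter> B\<close> by \<open>\<alpha>\<^sub>t\<close> in \<open>\<xi>\<^sub>A\<close> and by \<open>\<beta>\<^sub>t\<close> in \<open>\<xi>\<^sub>B\<close>; a term becomes the base point as soon as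
  one of these labels reaches \<open>x0\<close>. This starts at \<open>\<Psi>\<close>, and at \<open>t = 1\<close> every point of a nonempty
  overlap has reached \<open>x0\<close> in one of the two factors, so exactly the terms of \<open>\<Phi>\<close> survive.
  Continuity is checked on labelled tuples, through which all the identification topologies
  factor.\<close>

lemma istopology_quotient:
  "istopology (\<lambda>U. U \<subseteq> q ` topspace T \<and> openin T {x \<in> topspace T. q x \<in> U})"
proof -
  have "{x \<in> topspace T. q x \<in> S \<inter> U} = {x \<in> topspace T. q x \<in> S} \<inter> {x \<in> topspace T. q x \<in> U}"
    for S U by auto
  moreover have "{x \<in> topspace T. q x \<in> \<Union>K} = (\<Union>U\<in>K. {x \<in> topspace T. q x \<in> U})" for K
    by auto
  ultimately show ?thesis
    unfolding istopology_def by auto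
qed

lemma openin_quotient_topology:
  "openin (quotient_topology T q) U \<longleftrightarrow> U \<subseteq> q ` topspace T \<and> openin T {x \<in> topspace T. q x \<in> U}"
  unfolding quotient_topology_def by (simp add: istopology_quotient)

lemma topspace_quotient_topology [simp]: "topspace (quotient_topology T q) = q ` topspace T"
proof -
  have "{x \<in> topspace T. q x \<in> q ` topspace T} = topspace T"
    by auto
  then have "openin (quotient_topology T q) (q ` topspace T)"
    by (simp add: openin_quotient_topology)
  then show ?thesis
    using openin_subset openin_quotient_topology[of T q "topspace (quotient_topology T q)"]
    by blast
qed

lemma quotient_map_quotient_topology: "quotient_map T (quotient_topology T q) q"
  by (auto simp: quotient_map_def openin_quotient_topology)

lemma continuous_map_quotient_topology: "continuous_map T (quotient_topology T q) q"
  by (rule quotient_imp_continuous_map[OF quotient_map_quotient_topology])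

lemma continuous_map_prod_sum_topology:
  assumes "\<And>k. k \<in> K \<Longrightarrow> continuous_map (prod_topology Z (Y k)) T (\<lambda>z. g (fst z, (k, snd z)))"
  shows "continuous_map (prod_topology Z (sum_topology Y K)) T g"
  unfolding continuous_map_def
proof (intro conjI allI impI)
  show "g \<in> topspace (prod_topology Z (sum_topology Y K)) \<rightarrow> topspace T"
  proof
    fix x assume "x \<in> topspace (prod_topology Z (sum_topology Y K))"
    then obtain z k y where x: "x = (z, (k, y))" and k: "k \<in> K"
      and zy: "(z, y) \<in> topspace (prod_topology Z (Y k))"
      by auto
    have "g (fst (z, y), (k, snd (z, y))) \<in> topspace T"
      using continuous_map_funspace[OF assms[OF k]] zy by (rule funcset_mem)
    then show "g x \<in> topspace T"
      by (simp add: x)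
  qed
  fix U assume U: "openin T U"
  show "openin (prod_topology Z (sum_topology Y K)) {x \<in> topspace (prod_topology Z (sum_topology Y K)). g x \<in> U}"
    unfolding openin_prod_topology_alt
  proof (intro allI impI)
    fix z w assume zw: "(z, w) \<in> {x \<in> topspace (prod_topology Z (sum_topology Y K)). g x \<in> U}"
    obtain k y where w: "w = (k, y)" by (cases w)
    have k: "k \<in> K" and zy: "(z, y) \<in> {x \<in> topspace (prod_topology Z (Y k)). g (fst x, (k, snd x)) \<in> U}"
      using zw w by auto
    have "openin (prod_topology Z (Y k)) {x \<in> topspace (prod_topology Z (Y k)). g (fst x, (k, snd x)) \<in> U}"
      using assms[OF k] U by (simp add: continuous_map_def)
    then obtain A B where AB: "openin Z A" "openin (Y k) B" "z \<in> A" "y \<in> B"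
      "A \<times> B \<subseteq> {x \<in> topspace (prod_topology Z (Y k)). g (fst x, (k, snd x)) \<in> U}"
      using zy unfolding openin_prod_topology_alt by meson
    have "openin (sum_topology Y K) (Pair k ` B)"
      using open_map_component_injection[OF k] AB(2) unfolding open_map_def by blast
    moreover have "A \<times> Pair k ` B \<subseteq> {x \<in> topspace (prod_topology Z (sum_topology Y K)). g x \<in> U}"
    proof
      fix p assume "p \<in> A \<times> Pair k ` B"
      then obtain a b where p: "p = (a, (k, b))" and "(a, b) \<in> A \<times> B"
        by blast
      then have "(a, b) \<in> {x \<in> topspace (prod_topology Z (Y k)). g (fst x, (k, snd x)) \<in> U}"
        using AB(5) by blast
      then show "p \<in> {x \<in> topspace (prod_topology Z (sum_topology Y K)). g x \<in> U}"
        using p k by simp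
    qed
    ultimately show "\<exists>U' V. openin Z U' \<and> openin (sum_topology Y K) V \<and> z \<in> U' \<and> w \<in> V \<and>
        U' \<times> V \<subseteq> {x \<in> topspace (prod_topology Z (sum_topology Y K)). g x \<in> U}"
      using AB w by blast
  qed
qed

lemma quotient_map_prod_unit_interval:
  assumes "quotient_map X Y f"
  shows "quotient_map (prod_topology (top_of_set {0..1::real}) X) (prod_topology (top_of_set {0..1}) Y)
           (\<lambda>(t, x). (t, f x))"
proof (rule quotient_map_prod_right[OF _ _ assms])
  show "locally_compact_space (top_of_set {0..1::real})"
    by (simp add: compact_imp_locally_compact_space compact_space_subtopology)
  show "Hausdorff_space (top_of_set {0..1::real}) \<or> regular_space (top_of_set {0..1::real})"
    by (simp add: Hausdorff_space_subtopology)
qed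

section \<open>Deformations of a sphere\<close>

definition dot :: "nat \<Rightarrow> (nat \<Rightarrow> real) \<Rightarrow> (nat \<Rightarrow> real) \<Rightarrow> real" where
  "dot d x y = (\<Sum>i\<le>d. x i * y i)"

lemma in_topspace_nsphere_iff:
  "x \<in> topspace (nsphere d) \<longleftrightarrow> dot d x x = 1 \<and> (\<forall>i>d. x i = 0)"
  by (simp add: nsphere dot_def power2_eq_square)

lemma dot_commute: "dot d x y = dot d y x"
  by (simp add: dot_def mult.commute)

lemma dot_uminus_left: "dot d (\<lambda>i. - x i) y = - dot d x y"
  by (simp add: dot_def sum_negf)

lemma dot_self_nonneg: "0 \<le> dot d x x"
  by (simp add: dot_def sum_nonneg)

lemma dot_self_lincomb:
  "dot d (\<lambda>i. a * u i + b * v i + c * w i) (\<lambda>i. a * u i + b * v i + c * w i) =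
     a\<^sup>2 * dot d u u + b\<^sup>2 * dot d v v + c\<^sup>2 * dot d w w
     + 2 * a * b * dot d u v + 2 * a * c * dot d u w + 2 * b * c * dot d v w"
  by (simp add: dot_def power2_eq_square algebra_simps sum.distrib sum_distrib_left)

lemma dot_self_lincomb2:
  "dot d (\<lambda>i. a * u i + b * v i) (\<lambda>i. a * u i + b * v i) =
     a\<^sup>2 * dot d u u + b\<^sup>2 * dot d v v + 2 * a * b * dot d u v"
  using dot_self_lincomb[of d a u b v 0 v] by simp

lemma abs_dot_le_1:
  assumes "dot d x x = 1" "dot d y y = 1"
  shows "\<bar>dot d x y\<bar> \<le> 1"
proof -
  have "0 \<le> 1 + s\<^sup>2 + 2 * s * dot d x y" for s
    using dot_self_nonneg[of d "\<lambda>i. 1 * x i + s * y i"] unfolding dot_self_lincomb2 assms by simp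
  from this[of 1] this[of "-1"] show ?thesis
    by auto
qed

lemma uminus_in_nsphere: "x \<in> topspace (nsphere d) \<Longrightarrow> (\<lambda>i. - x i) \<in> topspace (nsphere d)"
  by (simp add: in_topspace_nsphere_iff dot_def sum_negf)

lemma nsphere_exists_orthogonal:
  assumes u: "u \<in> topspace (nsphere d)" and d: "1 \<le> d"
  obtains w where "w \<in> topspace (nsphere d)" "dot d w u = 0"
proof -
  have uu: "dot d u u = 1"
    using u by (simp add: in_topspace_nsphere_iff)
  obtain a where a: "a \<le> d" "u a \<noteq> 0"
    using uu by (metis (no_types, lifting) atMost_iff dot_def mult_zero_left sum.neutral zero_neq_one)
  define b where "b = (if a = 0 then 1 else 0 :: nat)"
  have b: "b \<le> d" "b \<noteq> a"
    using d by (auto simp: b_def)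
  define r where "r = sqrt ((u a)\<^sup>2 + (u b)\<^sup>2)"
  have r: "r\<^sup>2 = (u a)\<^sup>2 + (u b)\<^sup>2" "(u a)\<^sup>2 + (u b)\<^sup>2 > 0"
    using a(2) by (simp_all add: r_def add_pos_nonneg)
  define w where "w = (\<lambda>i. if i = a then u b / r else if i = b then - u a / r else 0)"
  have "dot d w w = (u b / r)\<^sup>2 + (u a / r)\<^sup>2"
    unfolding dot_def w_def using a b
    by (simp add: if_distrib[of "\<lambda>x. x * _"] sum.If_cases power2_eq_square Int_absorb1 flip: Collect_conj_eq)
  then have "dot d w w = 1"
    using r a(2) by (simp add: power_divide add_divide_distrib[symmetric] add.commute)
  moreover have "dot d w u = 0"
    unfolding dot_def w_def using a b
    by (simp add: if_distrib[of "\<lambda>x. x * _"] sum.If_cases Int_absorb1 flip: Collect_conj_eq)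
  moreover have "\<forall>i>d. w i = 0"
    using a b by (auto simp: w_def)
  ultimately show ?thesis
    using that[of w] by (simp add: in_topspace_nsphere_iff)
qed

lemma continuous_map_into_nsphere:
  assumes "\<And>i. continuous_map Z euclideanreal (\<lambda>z. g z i)"
    and "\<And>z. z \<in> topspace Z \<Longrightarrow> g z \<in> topspace (nsphere d)"
  shows "continuous_map Z (nsphere d) g"
proof -
  have "continuous_map Z (powertop_real UNIV) g"
    using assms(1) by (simp add: continuous_map_componentwise_UNIV)
  moreover have "g \<in> topspace Z \<rightarrow> {x. (\<Sum>i\<le>d. x i ^ 2) = 1 \<and> (\<forall>i>d. x i = 0)}"
    using assms(2) by (auto simp: nsphere)
  ultimately show ?thesis
    by (simp add: nsphere continuous_map_in_subtopology)
qed

lemma continuous_map_snd_coordinate: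
  "continuous_map (prod_topology T (nsphere d)) euclideanreal (\<lambda>z. snd z i)"
  using continuous_map_compose[OF continuous_map_snd continuous_map_nsphere_projection]
  by (simp add: o_def)

lemma continuous_map_snd_dot:
  "continuous_map (prod_topology T (nsphere d)) euclideanreal (\<lambda>z. dot d (snd z) y)"
  unfolding dot_def
  by (intro continuous_map_sum continuous_map_real_mult continuous_map_snd_coordinate) auto

lemma continuous_map_fst_real:
  "continuous_map (prod_topology (top_of_set S) Y) euclideanreal fst"
  using continuous_map_fst[of "top_of_set S" Y] continuous_map_into_fulltopology by blast

lemma continuous_map_real_cos:
  "continuous_map X euclideanreal f \<Longrightarrow> continuous_map X euclideanreal (\<lambda>x. cos (f x))"
  using continuous_map_compose[of X euclideanreal f euclideanreal cos]
  by (simp add: o_def continuous_on_cos continuous_on_id)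

lemma continuous_map_real_sin:
  "continuous_map X euclideanreal f \<Longrightarrow> continuous_map X euclideanreal (\<lambda>x. sin (f x))"
  using continuous_map_compose[of X euclideanreal f euclideanreal sin]
  by (simp add: o_def continuous_on_sin continuous_on_id)

text \<open>The unit vector in the direction of \<open>a u + b (x - p u)\<close>, where \<open>p = x \<cdot> u\<close>: at
  time \<open>t = 1\<close> the coefficient \<open>b\<close> vanishes exactly on the closed hemisphere \<open>p \<ge> 0\<close>,
  while \<open>a\<close> stays away from \<open>0\<close> where \<open>b\<close> does.\<close>
definition pole_pull :: "nat \<Rightarrow> (nat \<Rightarrow> real) \<Rightarrow> real \<Rightarrow> (nat \<Rightarrow> real) \<Rightarrow> nat \<Rightarrow> real" where
  "pole_pull d u t x =
     (let p = dot d x u; a = p + t / 2; b = 1 - t * min 1 (p + 1)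
      in (\<lambda>i. ((a - b * p) * u i + b * x i) / sqrt (a\<^sup>2 + b\<^sup>2 * (1 - p\<^sup>2))))"

lemma pole_pull_norm_pos:
  fixes p t :: real
  assumes "\<bar>p\<bar> \<le> 1" "0 \<le> t" "t \<le> 1"
  shows "0 < (p + t / 2)\<^sup>2 + (1 - t * min 1 (p + 1))\<^sup>2 * (1 - p\<^sup>2)"
proof (cases "1 - t * min 1 (p + 1) = 0 \<or> \<bar>p\<bar> = 1")
  case True
  then have "p + t / 2 \<noteq> 0"
  proof
    assume b: "1 - t * min 1 (p + 1) = 0"
    have "t * min 1 (p + 1) \<le> t"
      using mult_left_le[of "min 1 (p + 1)" t] assms by simp
    then have "t = 1"
      using b assms by linarith
    with b have "p \<ge> 0"
      by (auto simp: min_def split: if_splits)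
    then show ?thesis
      using \<open>t = 1\<close> by simp
  qed (use assms in auto)
  moreover have "0 \<le> (1 - t * min 1 (p + 1))\<^sup>2 * (1 - p\<^sup>2)"
    using assms by (intro mult_nonneg_nonneg) (auto simp: abs_square_le_1)
  ultimately show ?thesis
    by (simp add: add_pos_nonneg)
next
  case False
  then have "0 < 1 - p\<^sup>2"
    using assms by (simp add: abs_square_less_1)
  moreover have "0 < (1 - t * min 1 (p + 1))\<^sup>2"
    using False by simp
  ultimately show ?thesis
    by (simp add: add_nonneg_pos)
qed

lemma pole_pull_in_nsphere:
  assumes x: "x \<in> topspace (nsphere d)" and u: "u \<in> topspace (nsphere d)" and t: "0 \<le> t" "t \<le> 1"
  shows "pole_pull d u t x \<in> topspace (nsphere d)"
proof -
  define p where "p = dot d x u"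
  define a where "a = p + t / 2"
  define b where "b = 1 - t * min 1 (p + 1)"
  define s where "s = sqrt (a\<^sup>2 + b\<^sup>2 * (1 - p\<^sup>2))"
  have xx: "dot d x x = 1" and uu: "dot d u u = 1" and zero: "\<forall>i>d. x i = 0" "\<forall>i>d. u i = 0"
    using x u by (auto simp: in_topspace_nsphere_iff)
  have "0 < a\<^sup>2 + b\<^sup>2 * (1 - p\<^sup>2)"
    unfolding a_def b_def using abs_dot_le_1[OF xx uu] t by (intro pole_pull_norm_pos) (auto simp: p_def)
  then have s: "s\<^sup>2 = a\<^sup>2 + b\<^sup>2 * (1 - p\<^sup>2)" "s > 0"
    by (simp_all add: s_def)
  have eq: "pole_pull d u t x = (\<lambda>i. ((a - b * p) / s) * u i + (b / s) * x i)"
    by (simp add: pole_pull_def Let_def p_def a_def b_def s_def add_divide_distrib)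
  have "dot d (pole_pull d u t x) (pole_pull d u t x) =
      ((a - b * p) / s)\<^sup>2 + (b / s)\<^sup>2 + 2 * ((a - b * p) / s) * (b / s) * p"
    unfolding eq dot_self_lincomb2 by (simp add: xx uu dot_commute[of d u x] p_def)
  also have "\<dots> = (a\<^sup>2 + b\<^sup>2 * (1 - p\<^sup>2)) / s\<^sup>2"
    using s by (simp add: field_simps power2_eq_square)
  also have "\<dots> = 1"
    using s(2) by (simp add: s(1)[symmetric])
  finally show ?thesis
    using zero by (simp add: in_topspace_nsphere_iff eq)
qed

lemma pole_pull_0: "x \<in> topspace (nsphere d) \<Longrightarrow> pole_pull d u 0 x = x"
  by (simp add: pole_pull_def in_topspace_nsphere_iff)

lemma pole_pull_1:
  assumes "0 \<le> dot d x u"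
  shows "pole_pull d u 1 x = u"
proof -
  have "1 - min 1 (dot d x u + 1) = 0" "dot d x u + 1 / 2 > 0"
    using assms by simp_all
  then show ?thesis
    by (simp add: pole_pull_def Let_def)
qed

lemma pole_pull_pole:
  assumes "u \<in> topspace (nsphere d)" "0 \<le> t"
  shows "pole_pull d u t u = u"
proof
  fix i
  have "dot d u u = 1"
    using assms(1) by (simp add: in_topspace_nsphere_iff)
  then have "pole_pull d u t u i =
      ((1 + t / 2 - (1 - t * min 1 (1 + 1)) * 1) * u i + (1 - t * min 1 (1 + 1)) * u i)
        / sqrt ((1 + t / 2)\<^sup>2 + (1 - t * min 1 (1 + 1))\<^sup>2 * (1 - 1\<^sup>2))"
    by (simp add: pole_pull_def)
  also have "\<dots> = ((1 + t / 2) * u i) / sqrt ((1 + t / 2)\<^sup>2)"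
    by (simp add: algebra_simps)
  also have "\<dots> = u i"
    using assms(2) by simp
  finally show "pole_pull d u t u i = u i" .
qed

lemma continuous_map_pole_pull:
  assumes u: "u \<in> topspace (nsphere d)"
  shows "continuous_map (prod_topology (top_of_set {0..1}) (nsphere d)) (nsphere d)
           (\<lambda>z. pole_pull d u (fst z) (snd z))"
proof (rule continuous_map_into_nsphere)
  let ?Z = "prod_topology (top_of_set {0..1::real}) (nsphere d)"
  fix i
  have "(dot d (snd z) u + fst z / 2)\<^sup>2 + (1 - fst z * min 1 (dot d (snd z) u + 1))\<^sup>2 * (1 - (dot d (snd z) u)\<^sup>2) \<noteq> 0"
    if "z \<in> topspace ?Z" for z
    using that abs_dot_le_1[of d "snd z" u] u pole_pull_norm_pos[of "dot d (snd z) u" "fst z"]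
    by (auto simp: in_topspace_nsphere_iff)
  then show "continuous_map ?Z euclideanreal (\<lambda>z. pole_pull d u (fst z) (snd z) i)"
    unfolding pole_pull_def Let_def
    by (intro continuous_map_real_divide continuous_map_add continuous_map_diff continuous_map_real_mult
        continuous_map_sqrt continuous_map_real_pow continuous_map_real_min continuous_map_fst_real
        continuous_map_snd_coordinate continuous_map_snd_dot continuous_map_canonical_const) auto
qed (use u pole_pull_in_nsphere in auto)

text \<open>The rotation by the angle \<open>\<theta>\<close> in the plane spanned by the orthonormal vectors \<open>u\<close>
  and \<open>w\<close>, fixing the orthogonal complement.\<close>
definition plane_rotation ::
    "nat \<Rightarrow> (nat \<Rightarrow> real) \<Rightarrow> (nat \<Rightarrow> real) \<Rightarrow> real \<Rightarrow> (nat \<Rightarrow> real) \<Rightarrow> nat \<Rightarrow> real" where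
  "plane_rotation d u w \<theta> y =
     (let p = dot d y u; q = dot d y w
      in (\<lambda>i. y i + ((cos \<theta> - 1) * p - sin \<theta> * q) * u i + ((cos \<theta> - 1) * q + sin \<theta> * p) * w i))"

lemma plane_rotation_in_nsphere:
  assumes y: "y \<in> topspace (nsphere d)" and u: "u \<in> topspace (nsphere d)"
    and w: "w \<in> topspace (nsphere d)" and wu: "dot d w u = 0"
  shows "plane_rotation d u w \<theta> y \<in> topspace (nsphere d)"
proof -
  have yy: "dot d y y = 1" and uu: "dot d u u = 1" and ww: "dot d w w = 1"
    and zero: "\<forall>i>d. y i = 0" "\<forall>i>d. u i = 0" "\<forall>i>d. w i = 0"
    using y u w by (auto simp: in_topspace_nsphere_iff)
  define p where "p = dot d y u"
  define q where "q = dot d y w"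
  define A where "A = (cos \<theta> - 1) * p - sin \<theta> * q"
  define B where "B = (cos \<theta> - 1) * q + sin \<theta> * p"
  have eq: "plane_rotation d u w \<theta> y = (\<lambda>i. 1 * y i + A * u i + B * w i)"
    by (simp add: plane_rotation_def Let_def A_def B_def p_def q_def)
  have "dot d (plane_rotation d u w \<theta> y) (plane_rotation d u w \<theta> y) = 1 + A\<^sup>2 + B\<^sup>2 + 2 * A * p + 2 * B * q"
    unfolding eq dot_self_lincomb using wu by (simp add: yy uu ww p_def q_def dot_commute[of d u w])
  also have "\<dots> = 1"
    using sin_cos_squared_add[of \<theta>] unfolding A_def B_def by algebra
  finally show ?thesis
    using zero by (simp add: in_topspace_nsphere_iff eq)
qed

lemma plane_rotation_0 [simp]: "plane_rotation d u w 0 y = y"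
  by (simp add: plane_rotation_def)

lemma plane_rotation_pi_antipode:
  assumes "u \<in> topspace (nsphere d)" "dot d w u = 0"
  shows "plane_rotation d u w pi (\<lambda>i. - u i) = u"
  using assms by (simp add: plane_rotation_def in_topspace_nsphere_iff dot_uminus_left dot_commute[of d u w])

lemma continuous_map_plane_rotation:
  assumes u: "u \<in> topspace (nsphere d)" and w: "w \<in> topspace (nsphere d)" and wu: "dot d w u = 0"
  shows "continuous_map (prod_topology euclideanreal (nsphere d)) (nsphere d)
           (\<lambda>z. plane_rotation d u w (fst z) (snd z))"
proof (rule continuous_map_into_nsphere)
  show "continuous_map (prod_topology euclideanreal (nsphere d)) euclideanreal
          (\<lambda>z. plane_rotation d u w (fst z) (snd z) i)" for i
    unfolding plane_rotation_def Let_def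
    by (intro continuous_map_add continuous_map_diff continuous_map_real_mult continuous_map_real_cos
        continuous_map_real_sin continuous_map_fst continuous_map_snd_coordinate continuous_map_snd_dot
        continuous_map_canonical_const)
qed (use plane_rotation_in_nsphere[OF _ u w wu] in auto)

lemma nsphere_deformations:
  assumes x0: "x0 \<in> topspace (nsphere d)" and d: "1 \<le> d"
  obtains \<alpha> \<beta> :: "real \<Rightarrow> (nat \<Rightarrow> real) \<Rightarrow> nat \<Rightarrow> real" where
    "continuous_map (prod_topology (top_of_set {0..1}) (nsphere d)) (nsphere d) (\<lambda>z. \<alpha> (fst z) (snd z))"
    "continuous_map (prod_topology (top_of_set {0..1}) (nsphere d)) (nsphere d) (\<lambda>z. \<beta> (fst z) (snd z))"
    "\<And>x. x \<in> topspace (nsphere d) \<Longrightarrow> \<alpha> 0 x = x \<and> \<beta> 0 x = x"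
    "\<And>t. t \<in> {0..1} \<Longrightarrow> \<alpha> t x0 = x0"
    "\<And>x. x \<in> topspace (nsphere d) \<Longrightarrow> \<alpha> 1 x = x0 \<or> \<beta> 1 x = x0"
proof -
  obtain w where w: "w \<in> topspace (nsphere d)" "dot d w x0 = 0"
    using nsphere_exists_orthogonal[OF x0 d] by blast
  define x0' where "x0' = (\<lambda>i. - x0 i)"
  have x0': "x0' \<in> topspace (nsphere d)"
    unfolding x0'_def using x0 by (rule uminus_in_nsphere)
  define \<beta> where "\<beta> t x = plane_rotation d x0 w (t * pi) (pole_pull d x0' t x)" for t x
  let ?Z = "prod_topology (top_of_set {0..1::real}) (nsphere d)"
  have "continuous_map ?Z (prod_topology euclideanreal (nsphere d))
          (\<lambda>z. (fst z * pi, pole_pull d x0' (fst z) (snd z)))"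
    by (intro continuous_map_pairedI continuous_map_real_mult continuous_map_fst_real
        continuous_map_canonical_const continuous_map_pole_pull x0')
  from continuous_map_compose[OF this continuous_map_plane_rotation[OF x0 w]]
  have "continuous_map ?Z (nsphere d) (\<lambda>z. \<beta> (fst z) (snd z))"
    by (simp add: \<beta>_def o_def)
  moreover have "pole_pull d x0 1 x = x0 \<or> \<beta> 1 x = x0" for x
  proof (cases "0 \<le> dot d x x0")
    case True
    then show ?thesis
      by (simp add: pole_pull_1)
  next
    case False
    then have "pole_pull d x0' 1 x = x0'"
      by (intro pole_pull_1) (simp add: x0'_def dot_commute[of d x] dot_uminus_left)
    then show ?thesis
      using plane_rotation_pi_antipode[OF x0 w(2)] by (simp add: \<beta>_def x0'_def)
  qed
  ultimately show ?thesis
    using that[of "pole_pull d x0" \<beta>] continuous_map_pole_pull[OF x0] pole_pull_0 pole_pull_pole[OF x0]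
    by (simp add: \<beta>_def)
qed

lemma openin_nsphere_delete: "openin (nsphere d) (topspace (nsphere d) - {x})"
proof -
  have "Hausdorff_space (nsphere d)"
    unfolding nsphere
    by (rule Hausdorff_space_subtopology) (simp add: Hausdorff_space_product_topology)
  then show ?thesis
    using Hausdorff_imp_t1_space t1_space_openin_delete_alt by blast
qed

section \<open>Configuration spaces\<close>

abbreviation tuples :: "'m topology \<Rightarrow> 'x topology \<Rightarrow> nat \<Rightarrow> (nat \<Rightarrow> 'm \<times> 'x) topology" where
  "tuples M X j \<equiv> product_topology (\<lambda>i. prod_topology M X) {..<j}"

lemma in_topspace_labelled_tuples:
  "(j, f) \<in> topspace (labelled_tuples M X) \<longleftrightarrow>
     f \<in> (\<Pi>\<^sub>E i\<in>{..<j}. topspace M \<times> topspace X) \<and> inj_on (fst \<circ> f) {..<j}"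
  by (auto simp: labelled_tuples_def)

lemma conf_of_eq_image: "conf_of x0 (j, f) = f ` {i. i < j \<and> snd (f i) \<noteq> x0}"
  by (auto simp: conf_of_def)

lemma conf_of_restrict [simp]: "conf_of x0 (j, restrict f {..<j}) = conf_of x0 (j, f)"
  by (auto simp: conf_of_def)

lemma card_conf_of:
  assumes "inj_on (fst \<circ> f) {..<j}"
  shows "card (conf_of x0 (j, f)) = card {i. i < j \<and> snd (f i) \<noteq> x0}"
proof -
  have "inj_on f {i. i < j \<and> snd (f i) \<noteq> x0}"
    using assms by (auto simp: inj_on_def)
  then show ?thesis
    unfolding conf_of_eq_image by (rule card_image)
qed

lemma openin_tuples_labels_avoid:
  assumes "openin X (topspace X - {x0})" and "finite N" "N \<subseteq> {..<j}"
  shows "openin (tuples M X j) {g \<in> topspace (tuples M X j). \<forall>i \<in> N. snd (g i) \<in> topspace X - {x0}}"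
proof -
  have "{g \<in> topspace (tuples M X j). \<forall>i \<in> N. snd (g i) \<in> topspace X - {x0}} =
      (\<Inter>i\<in>N. {g \<in> topspace (tuples M X j). snd (g i) \<in> topspace X - {x0}}) \<inter> topspace (tuples M X j)"
    by blast
  also have "openin (tuples M X j) \<dots>"
  proof (rule openin_INT[OF \<open>finite N\<close>])
    fix i assume "i \<in> N"
    then have "continuous_map (tuples M X j) (prod_topology M X) (\<lambda>g. g i)"
      using assms(3) by (intro continuous_map_product_projection) auto
    then have "continuous_map (tuples M X j) X (\<lambda>g. snd (g i))"
      using continuous_map_compose[OF _ continuous_map_snd] by (simp add: o_def)
    then show "openin (tuples M X j) {g \<in> topspace (tuples M X j). snd (g i) \<in> topspace X - {x0}}"
      using assms(1) by (rule openin_continuous_map_preimage)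
  qed
  finally show ?thesis .
qed

lemma openin_labelled_tuples_card_gt:
  assumes "openin X (topspace X - {x0})"
  shows "openin (labelled_tuples M X) {z \<in> topspace (labelled_tuples M X). k < card (conf_of x0 z)}"
    (is "openin ?LT ?S")
proof (subst openin_subopen, intro ballI)
  fix z assume z: "z \<in> ?S"
  obtain j f where zjf: "z = (j, f)"
    by (cases z)
  have f: "f \<in> (\<Pi>\<^sub>E i\<in>{..<j}. topspace M \<times> topspace X)" and inj: "inj_on (fst \<circ> f) {..<j}"
    and k: "k < card (conf_of x0 (j, f))"
    using z zjf by (auto simp: in_topspace_labelled_tuples)
  define N where "N = {i. i < j \<and> snd (f i) \<noteq> x0}"
  \<comment> \<open>nearby tuples keep the non-base labels of \<open>f\<close> off the base point, hence have at least as many points\<close>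
  define G where "G = {g \<in> topspace (tuples M X j). \<forall>i \<in> N. snd (g i) \<in> topspace X - {x0}}"
  have "openin (tuples M X j) G"
    unfolding G_def using assms by (rule openin_tuples_labels_avoid) (auto simp: N_def)
  then have "openin (sum_topology (tuples M X) UNIV) (Pair j ` G)"
    using open_map_component_injection[of j UNIV "tuples M X"] unfolding open_map_def by blast
  then have open_T: "openin ?LT (Pair j ` G \<inter> {(k, f). inj_on (fst \<circ> f) {..<k}})"
    unfolding labelled_tuples_def openin_subtopology by blast
  have "f \<in> topspace (tuples M X j)"
    using f by simp
  moreover have "\<forall>i\<in>N. snd (f i) \<in> topspace X - {x0}"
    using f by (auto simp: N_def PiE_iff mem_Times_iff)
  ultimately have "f \<in> G"
    by (simp add: G_def)
  then have "z \<in> Pair j ` G \<inter> {(k, f). inj_on (fst \<circ> f) {..<k}}"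
    using zjf inj by auto
  moreover have "Pair j ` G \<inter> {(k, f). inj_on (fst \<circ> f) {..<k}} \<subseteq> ?S"
  proof
    fix w assume "w \<in> Pair j ` G \<inter> {(k, f). inj_on (fst \<circ> f) {..<k}}"
    then obtain g where w: "w = (j, g)" "g \<in> G" and inj_g: "inj_on (fst \<circ> g) {..<j}"
      by auto
    have "N \<subseteq> {i. i < j \<and> snd (g i) \<noteq> x0}"
      using w(2) by (auto simp: G_def N_def)
    then have "card N \<le> card {i. i < j \<and> snd (g i) \<noteq> x0}"
      by (intro card_mono) auto
    then have "k < card (conf_of x0 (j, g))"
      using k card_conf_of[OF inj] card_conf_of[OF inj_g] by (simp add: N_def)
    moreover have "g \<in> topspace (tuples M X j)"
      using w(2) by (simp add: G_def)
    then have "w \<in> topspace ?LT"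
      using w(1) inj_g by (simp add: in_topspace_labelled_tuples)
    ultimately show "w \<in> ?S"
      using w by simp
  qed
  ultimately show "\<exists>T. openin ?LT T \<and> z \<in> T \<and> T \<subseteq> ?S"
    using open_T by blast
qed

lemma closedin_conf_space_card_le:
  assumes "openin X (topspace X - {x0})"
  shows "closedin (conf_space M X x0) {\<xi> \<in> topspace (conf_space M X x0). card \<xi> \<le> k}"
proof -
  let ?LT = "labelled_tuples M X"
  let ?CS = "conf_space M X x0"
  have "{z \<in> topspace ?LT. conf_of x0 z \<in> {\<xi> \<in> topspace ?CS. k < card \<xi>}}
      = {z \<in> topspace ?LT. k < card (conf_of x0 z)}"
    by (auto simp: conf_space_def)
  then have "openin ?CS {\<xi> \<in> topspace ?CS. k < card \<xi>}"
    using openin_labelled_tuples_card_gt[OF assms, of M k]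
    by (simp add: conf_space_def openin_quotient_topology)
  moreover have "topspace ?CS - {\<xi> \<in> topspace ?CS. card \<xi> \<le> k} = {\<xi> \<in> topspace ?CS. k < card \<xi>}"
    by auto
  ultimately show ?thesis
    by (simp add: closedin_def)
qed

lemma quotient_map_conf_filt:
  assumes "openin X (topspace X - {x0})"
  shows "quotient_map
           (subtopology (labelled_tuples M X) {z \<in> topspace (labelled_tuples M X). card (conf_of x0 z) \<le> k})
           (conf_filt M X x0 k) (conf_of x0)"
  unfolding conf_filt_def
proof (rule quotient_map_restriction)
  show "quotient_map (labelled_tuples M X) (conf_space M X x0) (conf_of x0)"
    unfolding conf_space_def by (rule quotient_map_quotient_topology)
  show "{z \<in> topspace (labelled_tuples M X). conf_of x0 z \<in> {\<xi> \<in> topspace (conf_space M X x0). card \<xi> \<le> k}}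
      = {z \<in> topspace (labelled_tuples M X). card (conf_of x0 z) \<le> k}"
    by (auto simp: conf_space_def)
qed (use closedin_conf_space_card_le[OF assms] in blast)

definition collapse :: "nat \<Rightarrow> 'a set \<Rightarrow> 'a set option" where
  "collapse k \<xi> = (if card \<xi> = k then Some \<xi> else None)"

lemma conf_quot_eq: "conf_quot M X x0 k = quotient_topology (conf_filt M X x0 k) (collapse k)"
  by (simp add: conf_quot_def collapse_def[abs_def])

lemma quotient_map_wedge_V:
  "quotient_map (sum_topology (conf_quot M X x0) {1..}) (wedge_V M X x0) snd"
  unfolding wedge_V_def by (rule quotient_map_quotient_topology)

lemma continuous_map_into_wedge_V:
  assumes k: "1 \<le> k" and g: "continuous_map Z (labelled_tuples M X) g"
    and card: "\<And>z. z \<in> topspace Z \<Longrightarrow> card (conf_of x0 (g z)) \<le> k"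
  shows "continuous_map Z (wedge_V M X x0) (\<lambda>z. collapse k (conf_of x0 (g z)))"
proof -
  have "continuous_map Z (conf_space M X x0) (conf_of x0 \<circ> g)"
    using continuous_map_compose[OF g continuous_map_quotient_topology] by (simp add: conf_space_def)
  then have "continuous_map Z (conf_filt M X x0 k) (conf_of x0 \<circ> g)"
    using card continuous_map_funspace by (fastforce simp: conf_filt_def continuous_map_in_subtopology)
  moreover have "continuous_map (conf_filt M X x0 k) (conf_quot M X x0 k) (collapse k)"
    unfolding conf_quot_eq by (rule continuous_map_quotient_topology)
  moreover have "continuous_map (conf_quot M X x0 k) (sum_topology (conf_quot M X x0) {1..}) (Pair k)"
    using k by (intro continuous_map_component_injection) simp
  ultimately have "continuous_map Z (sum_topology (conf_quot M X x0) {1..}) (Pair k \<circ> (collapse k \<circ> (conf_of x0 \<circ> g)))"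
    by (meson continuous_map_compose)
  from continuous_map_compose[OF this quotient_imp_continuous_map[OF quotient_map_wedge_V]]
  show ?thesis
    by (simp add: o_def)
qed

lemma in_topspace_wedge_V_Some:
  assumes "Some \<xi> \<in> topspace (wedge_V M X x0)"
  shows "finite \<xi>" "\<And>p. p \<in> \<xi> \<Longrightarrow> snd p \<in> topspace X - {x0}"
proof -
  obtain k where "Some \<xi> \<in> topspace (conf_quot M X x0 k)"
    using assms by (auto simp: wedge_V_def)
  then obtain \<eta> where "\<eta> \<in> topspace (conf_filt M X x0 k)" "Some \<xi> = collapse k \<eta>"
    unfolding conf_quot_eq by auto
  then have "\<xi> \<in> topspace (conf_space M X x0)"
    by (auto simp: conf_filt_def collapse_def split: if_splits)
  then obtain j f where jf: "(j, f) \<in> topspace (labelled_tuples M X)" "\<xi> = conf_of x0 (j, f)"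
    by (auto simp: conf_space_def)
  then have \<xi>: "\<xi> = f ` {i. i < j \<and> snd (f i) \<noteq> x0}"
    by (simp add: conf_of_eq_image)
  then show "finite \<xi>"
    by simp
  show "snd p \<in> topspace X - {x0}" if "p \<in> \<xi>" for p
    using that jf(1) unfolding \<xi> by (auto simp: in_topspace_labelled_tuples PiE_iff mem_Times_iff)
qed

lemma None_in_topspace_wedge_V: "None \<in> topspace (wedge_V M X x0)"
proof -
  have "(0, \<lambda>_. undefined) \<in> topspace (labelled_tuples M X)"
    by (simp add: in_topspace_labelled_tuples)
  then have "{} \<in> topspace (conf_filt M X x0 1)"
    by (force simp: conf_filt_def conf_space_def conf_of_def)
  then have "None \<in> topspace (conf_quot M X x0 1)"
    by (force simp: conf_quot_eq collapse_def)
  then show ?thesis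
    by (force simp: wedge_V_def)
qed

lemma continuous_map_smash_map: "continuous_map (prod_topology Y Z) (smash Y Z) smash_map"
  unfolding smash_def by (rule continuous_map_quotient_topology)

lemma continuous_map_SP:
  assumes L: "finite L" and g: "\<And>c. c \<in> L \<Longrightarrow> continuous_map Z Y (\<lambda>z. g z c)"
  shows "continuous_map Z (SP Y e) (\<lambda>z. filter_mset (\<lambda>y. y \<noteq> e) (image_mset (g z) (mset_set L)))"
proof -
  let ?n = "card L"
  obtain enum where enum: "bij_betw enum {..<?n} L"
    using ex_bij_betw_nat_finite[OF L] by (auto simp: atLeast0LessThan)
  let ?q = "\<lambda>(n, f). mset (filter (\<lambda>y. y \<noteq> e) (map f [0..<n]))"
  let ?F = "\<lambda>z. (?n, restrict (\<lambda>i. g z (enum i)) {..<?n})"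
  have "continuous_map Z (product_topology (\<lambda>i. Y) {..<?n}) (\<lambda>z. restrict (\<lambda>i. g z (enum i)) {..<?n})"
    unfolding continuous_map_componentwise using g bij_betwE[OF enum] by auto
  then have "continuous_map Z (sum_topology (\<lambda>n. product_topology (\<lambda>i. Y) {..<n}) UNIV) ?F"
    using continuous_map_compose[OF _ continuous_map_component_injection[of ?n UNIV]]
    by (simp add: o_def)
  then have cont: "continuous_map Z (SP Y e) (?q \<circ> ?F)"
    unfolding SP_def using continuous_map_compose continuous_map_quotient_topology by blast
  have eq: "(?q \<circ> ?F) z = filter_mset (\<lambda>y. y \<noteq> e) (image_mset (g z) (mset_set L))" for z
  proof -
    have "(?q \<circ> ?F) z =
        filter_mset (\<lambda>y. y \<noteq> e) (image_mset (restrict (\<lambda>i. g z (enum i)) {..<?n}) (mset_set {..<?n}))"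
      by (simp add: mset_filter mset_map atLeast0LessThan)
    also have "image_mset (restrict (\<lambda>i. g z (enum i)) {..<?n}) (mset_set {..<?n}) =
        image_mset (g z) (image_mset enum (mset_set {..<?n}))"
    proof -
      have "image_mset (restrict (\<lambda>i. g z (enum i)) {..<?n}) (mset_set {..<?n}) =
          image_mset (g z \<circ> enum) (mset_set {..<?n})"
        by (rule image_mset_cong) simp
      then show ?thesis
        by (simp add: image_mset.compositionality)
    qed
    also have "image_mset enum (mset_set {..<?n}) = mset_set L"
      using enum by (simp add: image_mset_mset_set bij_betw_def)
    finally show ?thesis .
  qed
  show ?thesis
    using continuous_map_eq[OF cont eq] .
qed

section \<open>Deforming the overlaps of the covers\<close>

definition covers :: "'a set \<Rightarrow> ('a set \<times> 'a set) set" where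
  "covers S = {(A, B). A \<union> B = S \<and> A \<noteq> {} \<and> B \<noteq> {}}"

lemma finite_covers: "finite S \<Longrightarrow> finite (covers S)"
  by (rule finite_subset[of _ "Pow S \<times> Pow S"]) (auto simp: covers_def)

lemma bij_betw_covers_image:
  assumes "inj_on f S"
  shows "bij_betw (\<lambda>(I, J). (f ` I, f ` J)) (covers S) (covers (f ` S))"
proof (rule bij_betw_imageI)
  show "inj_on (\<lambda>(I, J). (f ` I, f ` J)) (covers S)"
  proof (rule inj_onI, clarify)
    fix I J I' J'
    assume "(I, J) \<in> covers S" "(I', J') \<in> covers S" and eq: "f ` I = f ` I'" "f ` J = f ` J'"
    then have "I \<subseteq> S" "J \<subseteq> S" "I' \<subseteq> S" "J' \<subseteq> S"
      by (auto simp: covers_def)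
    then show "I = I' \<and> J = J'"
      using inj_on_image_eq_iff[OF assms] eq by metis
  qed
  show "(\<lambda>(I, J). (f ` I, f ` J)) ` covers S = covers (f ` S)"
  proof
    show "covers (f ` S) \<subseteq> (\<lambda>(I, J). (f ` I, f ` J)) ` covers S"
    proof (clarify)
      fix A B assume c: "(A, B) \<in> covers (f ` S)"
      then have "A \<subseteq> f ` S" "B \<subseteq> f ` S"
        by (auto simp: covers_def)
      then have "(A, B) = (\<lambda>(I, J). (f ` I, f ` J)) ({i \<in> S. f i \<in> A}, {i \<in> S. f i \<in> B})"
        by auto
      moreover have "({i \<in> S. f i \<in> A}, {i \<in> S. f i \<in> B}) \<in> covers S"
        using c \<open>A \<subseteq> f ` S\<close> \<open>B \<subseteq> f ` S\<close> by (auto simp: covers_def)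
      ultimately show "(A, B) \<in> (\<lambda>(I, J). (f ` I, f ` J)) ` covers S"
        by (rule image_eqI)
    qed
  qed (auto simp: covers_def)
qed

definition relabel :: "('x \<Rightarrow> 'x) \<Rightarrow> ('m \<times> 'x) set \<Rightarrow> ('m \<times> 'x) set \<Rightarrow> ('m \<times> 'x) set" where
  "relabel F C A = (\<lambda>p. (fst p, if p \<in> C then F (snd p) else snd p)) ` A"

lemma relabel_id:
  assumes "\<And>p. p \<in> A \<inter> C \<Longrightarrow> F (snd p) = snd p"
  shows "relabel F C A = A"
proof -
  have "(fst p, if p \<in> C then F (snd p) else snd p) = p" if "p \<in> A" for p
    using that assms[of p] by (cases "p \<in> C") simp_all
  then have "relabel F C A = (\<lambda>p. p) ` A"
    unfolding relabel_def by (intro image_cong) simp_all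
  then show ?thesis
    by simp
qed

text \<open>A point whose label reaches the base point disappears, so the configuration drops to a
  lower filtration stage and the term becomes the base point \<open>None\<close> of \<open>V \<wedge> V\<close>.\<close>
definition deformed_pair ::
    "('x \<Rightarrow> 'x) \<Rightarrow> ('x \<Rightarrow> 'x) \<Rightarrow> 'x \<Rightarrow> ('m \<times> 'x) set \<times> ('m \<times> 'x) set
      \<Rightarrow> (('m \<times> 'x) set \<times> ('m \<times> 'x) set) option" where
  "deformed_pair a b x0 =
     (\<lambda>(A, B). if \<forall>p \<in> A \<inter> B. a (snd p) \<noteq> x0 \<and> b (snd p) \<noteq> x0
               then Some (relabel a B A, relabel b A B) else None)"

definition deformed_Psi ::
    "('x \<Rightarrow> 'x) \<Rightarrow> ('x \<Rightarrow> 'x) \<Rightarrow> 'x \<Rightarrow> ('m \<times> 'x) set option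
      \<Rightarrow> (('m \<times> 'x) set \<times> ('m \<times> 'x) set) option multiset" where
  "deformed_Psi a b x0 v = (case v of None \<Rightarrow> {#}
     | Some \<xi> \<Rightarrow> filter_mset (\<lambda>z. z \<noteq> None) (image_mset (deformed_pair a b x0) (mset_set (covers \<xi>))))"

lemma filter_image_mset_set:
  "finite S \<Longrightarrow> filter_mset P (image_mset g (mset_set S)) = image_mset g (mset_set {c \<in> S. P (g c)})"
  by (simp add: filter_mset_image_mset)

lemma deformed_Psi_eq_Psi_map:
  assumes v: "v \<in> topspace (wedge_V M X x0)"
    and id: "\<And>x. x \<in> topspace X \<Longrightarrow> a x = x \<and> b x = x"
  shows "deformed_Psi a b x0 v = Psi_map v"
proof (cases v)
  case (Some \<xi>)
  have "Some \<xi> \<in> topspace (wedge_V M X x0)"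
    using v Some by simp
  note fin = in_topspace_wedge_V_Some(1)[OF this] and lab = in_topspace_wedge_V_Some(2)[OF this]
  have "deformed_pair a b x0 c = Some c" if cover: "c \<in> covers \<xi>" for c
  proof -
    obtain A B where c: "c = (A, B)" and AB: "A \<subseteq> \<xi>" "B \<subseteq> \<xi>"
      using cover unfolding covers_def by blast
    then have "a (snd p) = snd p \<and> b (snd p) = snd p \<and> snd p \<noteq> x0" if "p \<in> A \<union> B" for p
      using that lab id by blast
    then show ?thesis
      by (auto simp: c deformed_pair_def intro!: relabel_id)
  qed
  then have "image_mset (deformed_pair a b x0) (mset_set (covers \<xi>)) = image_mset Some (mset_set (covers \<xi>))"
    by (intro image_mset_cong) (simp add: finite_covers[OF fin])
  also have "\<dots> = mset_set (Some ` covers \<xi>)"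
    by (simp add: image_mset_mset_set)
  finally have "deformed_Psi a b x0 v = filter_mset (\<lambda>z. z \<noteq> None) (mset_set (Some ` covers \<xi>))"
    by (simp add: Some deformed_Psi_def)
  also have "\<dots> = mset_set {z \<in> Some ` covers \<xi>. z \<noteq> None}"
    using finite_covers[OF fin] by (simp add: filter_mset_mset_set)
  also have "{z \<in> Some ` covers \<xi>. z \<noteq> None} = Some ` covers \<xi>"
    by blast
  finally show ?thesis
    by (simp add: Some Psi_map_def covers_def)
qed (simp add: deformed_Psi_def Psi_map_def)

lemma deformed_Psi_eq_Phi_map:
  assumes v: "v \<in> topspace (wedge_V M X x0)"
    and kill: "\<And>x. x \<in> topspace X \<Longrightarrow> a x = x0 \<or> b x = x0"
  shows "deformed_Psi a b x0 v = Phi_map v"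
proof (cases v)
  case (Some \<xi>)
  have "Some \<xi> \<in> topspace (wedge_V M X x0)"
    using v Some by simp
  note fin = in_topspace_wedge_V_Some(1)[OF this] and lab = in_topspace_wedge_V_Some(2)[OF this]
  define D where "D = {(A, B). A \<union> B = \<xi> \<and> A \<inter> B = {} \<and> A \<noteq> {} \<and> B \<noteq> {}}"
  have "deformed_pair a b x0 (A, B) = None" if AB: "(A, B) \<in> covers \<xi>" "(A, B) \<notin> D" for A B
  proof -
    obtain p where "p \<in> A \<inter> B"
      using AB by (auto simp: covers_def D_def)
    moreover have "p \<in> \<xi>"
      using AB \<open>p \<in> A \<inter> B\<close> by (auto simp: covers_def)
    ultimately show ?thesis
      using lab kill by (fastforce simp: deformed_pair_def)
  qed
  moreover have "deformed_pair a b x0 c = Some c" if "c \<in> D" for c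
  proof -
    obtain A B where c: "c = (A, B)" and disjoint: "A \<inter> B = {}"
      using \<open>c \<in> D\<close> unfolding D_def by blast
    have "relabel a B A = A" "relabel b A B = B"
      by (rule relabel_id, use disjoint in blast)+
    then show ?thesis
      using disjoint by (simp add: c deformed_pair_def)
  qed
  moreover have "D \<subseteq> covers \<xi>"
    by (auto simp: D_def covers_def)
  ultimately have "{c \<in> covers \<xi>. deformed_pair a b x0 c \<noteq> None} = D"
    by fastforce
  moreover have "finite D"
    using finite_covers[OF fin] \<open>D \<subseteq> covers \<xi>\<close> by (rule finite_subset[rotated])
  ultimately have "deformed_Psi a b x0 v = image_mset (deformed_pair a b x0) (mset_set D)"
    using finite_covers[OF fin] by (simp add: Some deformed_Psi_def filter_image_mset_set)
  also have "\<dots> = image_mset Some (mset_set D)"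
    using \<open>finite D\<close> \<open>\<And>c. c \<in> D \<Longrightarrow> deformed_pair a b x0 c = Some c\<close> by (intro image_mset_cong) simp
  finally show ?thesis
    by (simp add: Some Phi_map_def D_def image_mset_mset_set)
qed (simp add: deformed_Psi_def Phi_map_def)

section \<open>The deformation on labelled tuples\<close>

text \<open>Indices outside \<open>I\<close> get the base label and so drop out of the configuration: this
  restricts a tuple to \<open>I\<close> without changing its length.\<close>
definition relabel_tuple ::
    "('x \<Rightarrow> 'x) \<Rightarrow> 'x \<Rightarrow> nat set \<Rightarrow> nat set \<Rightarrow> (nat \<Rightarrow> 'm \<times> 'x) \<Rightarrow> nat \<Rightarrow> 'm \<times> 'x" where
  "relabel_tuple F x0 I J f i =
     (fst (f i), if i \<notin> I then x0 else if i \<in> J then F (snd (f i)) else snd (f i))"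

definition deformed_pair_tuple ::
    "('x \<Rightarrow> 'x) \<Rightarrow> ('x \<Rightarrow> 'x) \<Rightarrow> 'x \<Rightarrow> nat \<Rightarrow> (nat \<Rightarrow> 'm \<times> 'x) \<Rightarrow> nat set \<times> nat set
      \<Rightarrow> (('m \<times> 'x) set \<times> ('m \<times> 'x) set) option" where
  "deformed_pair_tuple a b x0 j f =
     (\<lambda>(I, J). smash_map (collapse (card I) (conf_of x0 (j, relabel_tuple a x0 I J f)),
                          collapse (card J) (conf_of x0 (j, relabel_tuple b x0 J I f))))"

definition index_covers :: "nat \<Rightarrow> nat \<Rightarrow> (nat set \<times> nat set) set" where
  "index_covers j k = (\<Union>N \<in> {N. N \<subseteq> {..<j} \<and> card N = k}. covers N)"

lemma finite_index_covers: "finite (index_covers j k)"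
  unfolding index_covers_def
  by (intro finite_UN_I finite_covers) (auto intro: finite_subset)

lemma conf_of_relabel_tuple:
  assumes "I \<subseteq> {..<j}"
  shows "conf_of x0 (j, relabel_tuple F x0 I J f) =
           relabel_tuple F x0 I J f ` {i \<in> I. snd (relabel_tuple F x0 I J f i) \<noteq> x0}"
proof -
  have "{i. i < j \<and> snd (relabel_tuple F x0 I J f i) \<noteq> x0} = {i \<in> I. snd (relabel_tuple F x0 I J f i) \<noteq> x0}"
    using assms by (auto simp: relabel_tuple_def)
  then show ?thesis
    by (simp add: conf_of_eq_image)
qed

lemma card_conf_of_relabel_tuple_le:
  assumes "I \<subseteq> {..<j}"
  shows "card (conf_of x0 (j, relabel_tuple F x0 I J f)) \<le> card I"
proof -
  have "finite I"
    using assms finite_subset by blast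
  have "card (conf_of x0 (j, relabel_tuple F x0 I J f)) \<le> card {i \<in> I. snd (relabel_tuple F x0 I J f i) \<noteq> x0}"
    unfolding conf_of_relabel_tuple[OF assms] by (rule card_image_le) (simp add: \<open>finite I\<close>)
  also have "\<dots> \<le> card I"
    using \<open>finite I\<close> by (intro card_mono) auto
  finally show ?thesis .
qed

lemma card_conf_of_relabel_tuple_less:
  assumes I: "I \<subseteq> {..<j}" and i: "i \<in> I" "snd (relabel_tuple F x0 I J f i) = x0"
  shows "card (conf_of x0 (j, relabel_tuple F x0 I J f)) < card I"
proof -
  have "finite I"
    using I finite_subset by blast
  have "card (conf_of x0 (j, relabel_tuple F x0 I J f)) \<le> card {i \<in> I. snd (relabel_tuple F x0 I J f i) \<noteq> x0}"
    unfolding conf_of_relabel_tuple[OF I] by (rule card_image_le) (simp add: \<open>finite I\<close>)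
  also have "\<dots> < card I"
    using i \<open>finite I\<close> by (intro psubset_card_mono) auto
  finally show ?thesis .
qed

lemma conf_of_relabel_tuple_eq_relabel:
  assumes I: "I \<subseteq> {..<j}" and inj: "inj_on (fst \<circ> f) (I \<union> J)"
    and labels: "\<And>i. i \<in> I \<Longrightarrow> snd (relabel_tuple F x0 I J f i) \<noteq> x0"
  shows "conf_of x0 (j, relabel_tuple F x0 I J f) = relabel F (f ` J) (f ` I)"
    and "card (conf_of x0 (j, relabel_tuple F x0 I J f)) = card I"
proof -
  have inj_f: "inj_on f (I \<union> J)"
    using inj by (auto simp: inj_on_def)
  have all: "{i \<in> I. snd (relabel_tuple F x0 I J f i) \<noteq> x0} = I"
    using labels by blast
  have "conf_of x0 (j, relabel_tuple F x0 I J f) = relabel_tuple F x0 I J f ` I"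
    by (simp add: conf_of_relabel_tuple[OF I] all)
  also have "\<dots> = relabel F (f ` J) (f ` I)"
    unfolding relabel_def image_image
  proof (rule image_cong)
    fix i assume "i \<in> I"
    then have "f i \<in> f ` J \<longleftrightarrow> i \<in> J"
      using inj_f by (auto simp: inj_on_def)
    then show "relabel_tuple F x0 I J f i = (fst (f i), if f i \<in> f ` J then F (snd (f i)) else snd (f i))"
      using \<open>i \<in> I\<close> by (simp add: relabel_tuple_def)
  qed simp
  finally show "conf_of x0 (j, relabel_tuple F x0 I J f) = relabel F (f ` J) (f ` I)" .
  have "inj_on (relabel_tuple F x0 I J f) I"
    using inj by (auto simp: inj_on_def relabel_tuple_def)
  then show "card (conf_of x0 (j, relabel_tuple F x0 I J f)) = card I"
    by (simp add: conf_of_relabel_tuple[OF I] all card_image)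
qed

text \<open>Only \<open>a\<close> has to fix the base point: an index of \<open>I \<inter> J\<close> carrying the base label
  already empties the first factor.\<close>
lemma deformed_pair_tuple_None:
  assumes ax0: "a x0 = x0" and IJ: "I \<union> J \<subseteq> {..<j}" and i: "i \<in> I \<union> J" "snd (f i) = x0"
  shows "deformed_pair_tuple a b x0 j f (I, J) = None"
proof (cases "i \<in> I")
  case True
  then have "card (conf_of x0 (j, relabel_tuple a x0 I J f)) < card I"
    using IJ i ax0 by (intro card_conf_of_relabel_tuple_less[of I j i]) (auto simp: relabel_tuple_def)
  then show ?thesis
    by (simp add: deformed_pair_tuple_def collapse_def smash_map_def)
next
  case False
  then have "card (conf_of x0 (j, relabel_tuple b x0 J I f)) < card J"
    using IJ i by (intro card_conf_of_relabel_tuple_less[of J j i]) (auto simp: relabel_tuple_def)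
  then show ?thesis
    by (simp add: deformed_pair_tuple_def collapse_def smash_map_def split: option.split)
qed

lemma deformed_pair_tuple_eq:
  assumes IJ: "I \<union> J \<subseteq> {..<j}" and inj: "inj_on (fst \<circ> f) (I \<union> J)"
    and labels: "\<And>i. i \<in> I \<union> J \<Longrightarrow> snd (f i) \<noteq> x0"
  shows "deformed_pair_tuple a b x0 j f (I, J) = deformed_pair a b x0 (f ` I, f ` J)"
proof -
  have I: "I \<subseteq> {..<j}" and J: "J \<subseteq> {..<j}"
    using IJ by auto
  have inj': "inj_on (fst \<circ> f) (J \<union> I)"
    using inj by (simp add: Un_commute)
  have "inj_on f (I \<union> J)"
    using inj by (auto simp: inj_on_def)
  then have overlap: "f ` I \<inter> f ` J = f ` (I \<inter> J)"
    by (rule inj_on_image_Int[symmetric]) auto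
  show ?thesis
  proof (cases "\<forall>i \<in> I \<inter> J. a (snd (f i)) \<noteq> x0 \<and> b (snd (f i)) \<noteq> x0")
    case True
    have "snd (relabel_tuple a x0 I J f i) \<noteq> x0" if "i \<in> I" for i
      using that True labels by (auto simp: relabel_tuple_def)
    note A = conf_of_relabel_tuple_eq_relabel[OF I inj this]
    have "snd (relabel_tuple b x0 J I f i) \<noteq> x0" if "i \<in> J" for i
      using that True labels by (auto simp: relabel_tuple_def)
    note B = conf_of_relabel_tuple_eq_relabel[OF J inj' this]
    show ?thesis
      using True A B by (simp add: deformed_pair_tuple_def deformed_pair_def overlap collapse_def smash_map_def)
  next
    case False
    then obtain i where i: "i \<in> I" "i \<in> J" "a (snd (f i)) = x0 \<or> b (snd (f i)) = x0"
      by blast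
    then have "card (conf_of x0 (j, relabel_tuple a x0 I J f)) < card I \<or>
               card (conf_of x0 (j, relabel_tuple b x0 J I f)) < card J"
      using card_conf_of_relabel_tuple_less[OF I i(1), of a x0 J f]
        card_conf_of_relabel_tuple_less[OF J i(2), of b x0 I f]
      by (auto simp: relabel_tuple_def)
    moreover have "\<not> (\<forall>p \<in> f ` I \<inter> f ` J. a (snd p) \<noteq> x0 \<and> b (snd p) \<noteq> x0)"
      using i unfolding overlap by blast
    ultimately show ?thesis
      by (auto simp: deformed_pair_tuple_def deformed_pair_def collapse_def smash_map_def split: option.split)
  qed
qed

lemma filter_image_mset_set_subset:
  assumes "finite T" "S \<subseteq> T" "\<And>c. c \<in> T - S \<Longrightarrow> g c = e"
  shows "filter_mset (\<lambda>z. z \<noteq> e) (image_mset g (mset_set T)) =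
         filter_mset (\<lambda>z. z \<noteq> e) (image_mset g (mset_set S))"
proof -
  have "{c \<in> T. g c \<noteq> e} = {c \<in> S. g c \<noteq> e}"
    using assms(2,3) by blast
  moreover have "finite S"
    using assms(1,2) by (rule finite_subset[rotated])
  ultimately show ?thesis
    using assms(1) by (simp add: filter_image_mset_set)
qed

lemma deformed_pair_tuple_outside_covers:
  assumes ax0: "a x0 = x0" and card: "card {i. i < j \<and> snd (f i) \<noteq> x0} \<le> k"
    and c: "c \<in> index_covers j k - covers {i. i < j \<and> snd (f i) \<noteq> x0}"
  shows "deformed_pair_tuple a b x0 j f c = None"
proof -
  let ?N = "{i. i < j \<and> snd (f i) \<noteq> x0}"
  obtain I J where IJ: "c = (I, J)" "I \<noteq> {}" "J \<noteq> {}" "I \<union> J \<subseteq> {..<j}" "card (I \<union> J) = k"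
    and not_cover: "(I, J) \<notin> covers ?N"
    using c by (auto simp: index_covers_def covers_def)
  have "\<not> I \<union> J \<subseteq> ?N"
  proof
    assume "I \<union> J \<subseteq> ?N"
    then have "I \<union> J = ?N"
      using card_seteq[of ?N "I \<union> J"] IJ(5) card by fastforce
    then show False
      using not_cover IJ(2,3) by (simp add: covers_def)
  qed
  then obtain i where "i \<in> I \<union> J" "snd (f i) = x0"
    using IJ(4) by auto
  then show ?thesis
    unfolding IJ(1) by (rule deformed_pair_tuple_None[of a x0 I J j, OF ax0 IJ(4)])
qed

lemma image_mset_deformed_pair_tuple_covers:
  assumes N: "N \<subseteq> {..<j}" and inj: "inj_on (fst \<circ> f) N" and labels: "\<And>i. i \<in> N \<Longrightarrow> snd (f i) \<noteq> x0"
  shows "image_mset (deformed_pair_tuple a b x0 j f) (mset_set (covers N)) =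
           image_mset (deformed_pair a b x0) (mset_set (covers (f ` N)))"
proof -
  have fin: "finite N"
    using N finite_subset by blast
  have "image_mset (deformed_pair_tuple a b x0 j f) (mset_set (covers N)) =
      image_mset (deformed_pair a b x0 \<circ> (\<lambda>(I, J). (f ` I, f ` J))) (mset_set (covers N))"
  proof (rule image_mset_cong)
    fix c assume "c \<in># mset_set (covers N)"
    then obtain I J where c: "c = (I, J)" "I \<union> J = N"
      using finite_covers[OF fin] by (auto simp: covers_def)
    have "deformed_pair_tuple a b x0 j f (I, J) = deformed_pair a b x0 (f ` I, f ` J)"
      using N inj labels by (intro deformed_pair_tuple_eq) (auto simp: c(2))
    then show "deformed_pair_tuple a b x0 j f c = (deformed_pair a b x0 \<circ> (\<lambda>(I, J). (f ` I, f ` J))) c"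
      by (simp add: c(1))
  qed
  also have "\<dots> = image_mset (deformed_pair a b x0) (mset_set (covers (f ` N)))"
    using bij_betw_covers_image[of f N] inj
    by (simp add: image_mset.compositionality[symmetric] image_mset_mset_set bij_betw_def inj_on_def)
  finally show ?thesis .
qed

lemma deformed_Psi_collapse_conf_of:
  assumes inj: "inj_on (fst \<circ> f) {..<j}" and card: "card (conf_of x0 (j, f)) \<le> k" and ax0: "a x0 = x0"
  shows "deformed_Psi a b x0 (collapse k (conf_of x0 (j, f))) =
           filter_mset (\<lambda>z. z \<noteq> None) (image_mset (deformed_pair_tuple a b x0 j f) (mset_set (index_covers j k)))"
proof -
  define N where "N = {i. i < j \<and> snd (f i) \<noteq> x0}"
  have N: "N \<subseteq> {..<j}" and inj_N: "inj_on (fst \<circ> f) N"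
    using inj by (auto simp: N_def intro: inj_on_subset)
  have conf: "conf_of x0 (j, f) = f ` N" and card_N: "card (f ` N) = card N"
    using card_image[of f N] inj_N by (auto simp: conf_of_eq_image N_def inj_on_def)
  have "card N \<le> k"
    using card by (simp add: conf card_N)
  have outside: "deformed_pair_tuple a b x0 j f c = None" if "c \<in> index_covers j k - covers N" for c
    using deformed_pair_tuple_outside_covers[of a x0 j f k, OF ax0] \<open>card N \<le> k\<close> that
    by (simp add: N_def)
  show ?thesis
  proof (cases "card N = k")
    case True
    then have "covers N \<subseteq> index_covers j k"
      using N by (auto simp: index_covers_def)
    have "filter_mset (\<lambda>z. z \<noteq> None) (image_mset (deformed_pair_tuple a b x0 j f) (mset_set (index_covers j k))) =
        filter_mset (\<lambda>z. z \<noteq> None) (image_mset (deformed_pair_tuple a b x0 j f) (mset_set (covers N)))"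
      using finite_index_covers \<open>covers N \<subseteq> index_covers j k\<close> outside by (rule filter_image_mset_set_subset)
    also have "image_mset (deformed_pair_tuple a b x0 j f) (mset_set (covers N)) =
        image_mset (deformed_pair a b x0) (mset_set (covers (f ` N)))"
      using N inj_N by (rule image_mset_deformed_pair_tuple_covers) (simp add: N_def)
    also have "filter_mset (\<lambda>z. z \<noteq> None) (image_mset (deformed_pair a b x0) (mset_set (covers (f ` N)))) =
        deformed_Psi a b x0 (collapse k (conf_of x0 (j, f)))"
      using True by (simp add: conf card_N collapse_def deformed_Psi_def)
    finally show ?thesis
      by (rule sym)
  next
    case False
    have "filter_mset (\<lambda>z. z \<noteq> None) (image_mset (deformed_pair_tuple a b x0 j f) (mset_set (index_covers j k))) =
        filter_mset (\<lambda>z. z \<noteq> None) (image_mset (deformed_pair_tuple a b x0 j f) (mset_set {}))"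
    proof (rule filter_image_mset_set_subset[OF finite_index_covers empty_subsetI])
      fix c assume "c \<in> index_covers j k - {}"
      with False have "c \<in> index_covers j k - covers N"
        by (auto simp: index_covers_def covers_def)
      then show "deformed_pair_tuple a b x0 j f c = None"
        by (rule outside)
    qed
    then show ?thesis
      using False by (simp add: conf card_N collapse_def deformed_Psi_def)
  qed
qed

section \<open>Continuity of the deformation\<close>

lemma continuous_map_relabel_tuple:
  fixes a :: "real \<Rightarrow> 'x \<Rightarrow> 'x" and M :: "'m topology"
  assumes a: "continuous_map (prod_topology (top_of_set {0..1}) X) X (\<lambda>z. a (fst z) (snd z))"
    and x0: "x0 \<in> topspace X" and inj: "\<forall>f \<in> S. inj_on (fst \<circ> f) {..<j}"
  shows "continuous_map (prod_topology (top_of_set {0..1}) (subtopology (tuples M X j) S))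
           (labelled_tuples M X) (\<lambda>z. (j, restrict (relabel_tuple (a (fst z)) x0 I J (snd z)) {..<j}))"
proof -
  let ?Z = "prod_topology (top_of_set {0..1::real}) (subtopology (tuples M X j) S)"
  have "continuous_map ?Z (prod_topology M X) (\<lambda>z. relabel_tuple (a (fst z)) x0 I J (snd z) i)"
    if i: "i < j" for i
  proof -
    have point: "continuous_map ?Z (prod_topology M X) (\<lambda>z. snd z i)"
      using continuous_map_compose[OF continuous_map_snd
          continuous_map_from_subtopology[OF continuous_map_product_projection[of i "{..<j}"]]] i
      by (simp add: o_def)
    have pos: "continuous_map ?Z M (\<lambda>z. fst (snd z i))"
      and lab: "continuous_map ?Z X (\<lambda>z. snd (snd z i))"
      using continuous_map_compose[OF point continuous_map_fst] continuous_map_compose[OF point continuous_map_snd]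
      by (simp_all add: o_def)
    have "continuous_map ?Z (prod_topology (top_of_set {0..1}) X) (\<lambda>z. (fst z, snd (snd z i)))"
      by (intro continuous_map_pairedI continuous_map_fst lab)
    from continuous_map_compose[OF this a]
    have "continuous_map ?Z X (\<lambda>z. a (fst z) (snd (snd z i)))"
      by (simp add: o_def)
    then show ?thesis
      using x0 by (simp add: relabel_tuple_def continuous_map_pairedI pos lab)
  qed
  then have "continuous_map ?Z (tuples M X j) (\<lambda>z. restrict (relabel_tuple (a (fst z)) x0 I J (snd z)) {..<j})"
    unfolding continuous_map_componentwise by auto
  then have "continuous_map ?Z (sum_topology (tuples M X) UNIV)
               (\<lambda>z. (j, restrict (relabel_tuple (a (fst z)) x0 I J (snd z)) {..<j}))"
    using continuous_map_compose[OF _ continuous_map_component_injection[of j UNIV]] by (simp add: o_def)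
  moreover have "inj_on (fst \<circ> restrict (relabel_tuple (a (fst z)) x0 I J (snd z)) {..<j}) {..<j}"
    if "z \<in> topspace ?Z" for z
  proof -
    have "inj_on (fst \<circ> snd z) {..<j}"
      using that inj by auto
    then show ?thesis
      by (simp add: inj_on_def relabel_tuple_def)
  qed
  ultimately show ?thesis
    unfolding labelled_tuples_def continuous_map_in_subtopology by auto
qed

lemma continuous_map_deformed_pair_tuple:
  fixes a b :: "real \<Rightarrow> 'x \<Rightarrow> 'x" and M :: "'m topology"
  assumes a: "continuous_map (prod_topology (top_of_set {0..1}) X) X (\<lambda>z. a (fst z) (snd z))"
    and b: "continuous_map (prod_topology (top_of_set {0..1}) X) X (\<lambda>z. b (fst z) (snd z))"
    and x0: "x0 \<in> topspace X" and inj: "\<forall>f \<in> S. inj_on (fst \<circ> f) {..<j}"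
    and c: "c \<in> index_covers j k"
  shows "continuous_map (prod_topology (top_of_set {0..1}) (subtopology (tuples M X j) S))
           (smash (wedge_V M X x0) (wedge_V M X x0)) (\<lambda>z. deformed_pair_tuple (a (fst z)) (b (fst z)) x0 j (snd z) c)"
proof -
  let ?Z = "prod_topology (top_of_set {0..1::real}) (subtopology (tuples M X j) S)"
  obtain I J where c: "c = (I, J)" and IJ: "I \<subseteq> {..<j}" "J \<subseteq> {..<j}" "I \<noteq> {}" "J \<noteq> {}"
    using c by (auto simp: index_covers_def covers_def)
  have card_pos: "1 \<le> card I" "1 \<le> card J"
    using IJ finite_subset by (fastforce simp: Suc_le_eq card_gt_0_iff)+
  have factor: "continuous_map ?Z (wedge_V M X x0)
                  (\<lambda>z. collapse (card I') (conf_of x0 (j, relabel_tuple (F (fst z)) x0 I' J' (snd z))))"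
    if F: "continuous_map (prod_topology (top_of_set {0..1}) X) X (\<lambda>z. F (fst z) (snd z))"
      and I': "I' \<subseteq> {..<j}" "1 \<le> card I'" for F :: "real \<Rightarrow> 'x \<Rightarrow> 'x" and I' J'
  proof -
    have "card (conf_of x0 (j, restrict (relabel_tuple (F (fst z)) x0 I' J' (snd z)) {..<j})) \<le> card I'"
      for z :: "real \<times> (nat \<Rightarrow> 'm \<times> 'x)"
      unfolding conf_of_restrict using I'(1) by (rule card_conf_of_relabel_tuple_le)
    then have "continuous_map ?Z (wedge_V M X x0)
        (\<lambda>z. collapse (card I') (conf_of x0 (j, restrict (relabel_tuple (F (fst z)) x0 I' J' (snd z)) {..<j})))"
      by (intro continuous_map_into_wedge_V[OF I'(2) continuous_map_relabel_tuple[OF F x0 inj]])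
    then show ?thesis
      by simp
  qed
  have "continuous_map ?Z (prod_topology (wedge_V M X x0) (wedge_V M X x0))
     (\<lambda>z. (collapse (card I) (conf_of x0 (j, relabel_tuple (a (fst z)) x0 I J (snd z))),
           collapse (card J) (conf_of x0 (j, relabel_tuple (b (fst z)) x0 J I (snd z)))))"
    by (intro continuous_map_pairedI factor a b IJ card_pos)
  from continuous_map_compose[OF this continuous_map_smash_map] show ?thesis
    by (simp add: o_def deformed_pair_tuple_def c)
qed

lemma continuous_map_deformed_Psi_tuples:
  fixes a b :: "real \<Rightarrow> 'x \<Rightarrow> 'x" and M :: "'m topology"
  assumes a: "continuous_map (prod_topology (top_of_set {0..1}) X) X (\<lambda>z. a (fst z) (snd z))"
    and b: "continuous_map (prod_topology (top_of_set {0..1}) X) X (\<lambda>z. b (fst z) (snd z))"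
    and x0: "x0 \<in> topspace X" and ax0: "\<And>t. t \<in> {0..1} \<Longrightarrow> a t x0 = x0"
    and inj: "\<forall>f \<in> S. inj_on (fst \<circ> f) {..<j}"
    and card: "\<forall>f \<in> S. card (conf_of x0 (j, f)) \<le> k"
  shows "continuous_map (prod_topology (top_of_set {0..1}) (subtopology (tuples M X j) S))
           (SP (smash (wedge_V M X x0) (wedge_V M X x0)) None)
           (\<lambda>z. deformed_Psi (a (fst z)) (b (fst z)) x0 (collapse k (conf_of x0 (j, snd z))))"
proof (rule continuous_map_eq)
  show "continuous_map (prod_topology (top_of_set {0..1}) (subtopology (tuples M X j) S))
          (SP (smash (wedge_V M X x0) (wedge_V M X x0)) None)
          (\<lambda>z. filter_mset (\<lambda>y. y \<noteq> None)
                 (image_mset (deformed_pair_tuple (a (fst z)) (b (fst z)) x0 j (snd z)) (mset_set (index_covers j k))))"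
  proof (rule continuous_map_SP[OF finite_index_covers])
    fix c assume "c \<in> index_covers j k"
    then show "continuous_map (prod_topology (top_of_set {0..1}) (subtopology (tuples M X j) S))
        (smash (wedge_V M X x0) (wedge_V M X x0)) (\<lambda>z. deformed_pair_tuple (a (fst z)) (b (fst z)) x0 j (snd z) c)"
      by (rule continuous_map_deformed_pair_tuple[OF a b x0 inj])
  qed
  fix z assume "z \<in> topspace (prod_topology (top_of_set {0..1::real}) (subtopology (tuples M X j) S))"
  then have t: "fst z \<in> {0..1}" and f: "snd z \<in> S"
    by (simp_all only: topspace_prod_topology mem_Times_iff topspace_subtopology) blast+
  show "filter_mset (\<lambda>y. y \<noteq> None)
               (image_mset (deformed_pair_tuple (a (fst z)) (b (fst z)) x0 j (snd z)) (mset_set (index_covers j k)))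
           = deformed_Psi (a (fst z)) (b (fst z)) x0 (collapse k (conf_of x0 (j, snd z)))"
    using bspec[OF inj f] bspec[OF card f] ax0[OF t] by (rule deformed_Psi_collapse_conf_of[symmetric])
qed

lemma continuous_map_deformed_Psi_conf_filt:
  fixes a b :: "real \<Rightarrow> 'x \<Rightarrow> 'x" and M :: "'m topology"
  assumes a: "continuous_map (prod_topology (top_of_set {0..1}) X) X (\<lambda>z. a (fst z) (snd z))"
    and b: "continuous_map (prod_topology (top_of_set {0..1}) X) X (\<lambda>z. b (fst z) (snd z))"
    and x0: "x0 \<in> topspace X" and ax0: "\<And>t. t \<in> {0..1} \<Longrightarrow> a t x0 = x0"
    and open_X: "openin X (topspace X - {x0})"
  shows "continuous_map (prod_topology (top_of_set {0..1}) (conf_filt M X x0 k))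
           (SP (smash (wedge_V M X x0) (wedge_V M X x0)) None)
           (\<lambda>z. deformed_Psi (a (fst z)) (b (fst z)) x0 (collapse k (snd z)))"
proof (rule continuous_compose_quotient_map[OF quotient_map_prod_unit_interval[OF quotient_map_conf_filt[OF open_X]]])
  let ?LT = "labelled_tuples M X"
  define S where "S j = {f. (j, f) \<in> topspace ?LT \<and> card (conf_of x0 (j, f)) \<le> k}" for j
  have "{(k, f). inj_on (fst \<circ> f) {..<k}} \<inter> {z \<in> topspace ?LT. card (conf_of x0 z) \<le> k} = Sigma UNIV S"
    by (auto simp: S_def labelled_tuples_def)
  then have stage: "subtopology ?LT {z \<in> topspace ?LT. card (conf_of x0 z) \<le> k}
      = sum_topology (\<lambda>j. subtopology (tuples M X j) (S j)) UNIV"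
    unfolding labelled_tuples_def subtopology_subtopology by (simp add: subtopology_sum_topology)
  show "continuous_map (prod_topology (top_of_set {0..1}) (subtopology ?LT {z \<in> topspace ?LT. card (conf_of x0 z) \<le> k}))
      (SP (smash (wedge_V M X x0) (wedge_V M X x0)) None)
      ((\<lambda>z. deformed_Psi (a (fst z)) (b (fst z)) x0 (collapse k (snd z))) \<circ> (\<lambda>(t, y). (t, conf_of x0 y)))"
    unfolding stage
  proof (rule continuous_map_prod_sum_topology)
    fix j
    have "\<forall>f \<in> S j. inj_on (fst \<circ> f) {..<j}" "\<forall>f \<in> S j. card (conf_of x0 (j, f)) \<le> k"
      by (simp_all add: S_def in_topspace_labelled_tuples)
    from continuous_map_deformed_Psi_tuples[OF a b x0 ax0 this]
    show "continuous_map (prod_topology (top_of_set {0..1}) (subtopology (tuples M X j) (S j)))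
        (SP (smash (wedge_V M X x0) (wedge_V M X x0)) None)
        (\<lambda>z. ((\<lambda>z. deformed_Psi (a (fst z)) (b (fst z)) x0 (collapse k (snd z))) \<circ> (\<lambda>(t, y). (t, conf_of x0 y)))
               (fst z, (j, snd z)))"
      by simp
  qed
qed

lemma continuous_map_deformed_Psi:
  fixes a b :: "real \<Rightarrow> 'x \<Rightarrow> 'x" and M :: "'m topology"
  assumes a: "continuous_map (prod_topology (top_of_set {0..1}) X) X (\<lambda>z. a (fst z) (snd z))"
    and b: "continuous_map (prod_topology (top_of_set {0..1}) X) X (\<lambda>z. b (fst z) (snd z))"
    and x0: "x0 \<in> topspace X" and ax0: "\<And>t. t \<in> {0..1} \<Longrightarrow> a t x0 = x0"
    and open_X: "openin X (topspace X - {x0})"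
  shows "continuous_map (prod_topology (top_of_set {0..1}) (wedge_V M X x0))
           (SP (smash (wedge_V M X x0) (wedge_V M X x0)) None)
           (\<lambda>z. deformed_Psi (a (fst z)) (b (fst z)) x0 (snd z))"
proof (rule continuous_compose_quotient_map[OF quotient_map_prod_unit_interval[OF quotient_map_wedge_V]])
  show "continuous_map (prod_topology (top_of_set {0..1}) (sum_topology (conf_quot M X x0) {1..}))
      (SP (smash (wedge_V M X x0) (wedge_V M X x0)) None)
      ((\<lambda>z. deformed_Psi (a (fst z)) (b (fst z)) x0 (snd z)) \<circ> (\<lambda>(t, y). (t, snd y)))"
  proof (rule continuous_map_prod_sum_topology)
    fix k
    show "continuous_map (prod_topology (top_of_set {0..1}) (conf_quot M X x0 k))
        (SP (smash (wedge_V M X x0) (wedge_V M X x0)) None)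
        (\<lambda>z. ((\<lambda>z. deformed_Psi (a (fst z)) (b (fst z)) x0 (snd z)) \<circ> (\<lambda>(t, y). (t, snd y))) (fst z, (k, snd z)))"
      unfolding conf_quot_eq
      by (rule continuous_compose_quotient_map[OF quotient_map_prod_unit_interval[OF quotient_map_quotient_topology]])
        (simp add: o_def case_prod_unfold, rule continuous_map_deformed_Psi_conf_filt[OF a b x0 ax0 open_X])
  qed
qed

lemma homotopic_with_Psi_map_Phi_map:
  fixes a b :: "real \<Rightarrow> 'x \<Rightarrow> 'x" and M :: "'m topology"
  assumes a: "continuous_map (prod_topology (top_of_set {0..1}) X) X (\<lambda>z. a (fst z) (snd z))"
    and b: "continuous_map (prod_topology (top_of_set {0..1}) X) X (\<lambda>z. b (fst z) (snd z))"
    and x0: "x0 \<in> topspace X" and open_X: "openin X (topspace X - {x0})"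
    and start: "\<And>x. x \<in> topspace X \<Longrightarrow> a 0 x = x \<and> b 0 x = x"
    and ax0: "\<And>t. t \<in> {0..1} \<Longrightarrow> a t x0 = x0"
    and finish: "\<And>x. x \<in> topspace X \<Longrightarrow> a 1 x = x0 \<or> b 1 x = x0"
  shows "homotopic_with (\<lambda>h. h None = {#}) (wedge_V M X x0)
           (SP (smash (wedge_V M X x0) (wedge_V M X x0)) None) Psi_map Phi_map"
proof (rule homotopic_with[THEN iffD2], metis None_in_topspace_wedge_V, intro exI conjI ballI)
  show "continuous_map (prod_topology (top_of_set {0..1}) (wedge_V M X x0))
      (SP (smash (wedge_V M X x0) (wedge_V M X x0)) None) (\<lambda>z. deformed_Psi (a (fst z)) (b (fst z)) x0 (snd z))"
    by (rule continuous_map_deformed_Psi[OF a b x0 ax0 open_X])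
  show "deformed_Psi (a (fst (0, v))) (b (fst (0, v))) x0 (snd (0, v)) = Psi_map v"
    if "v \<in> topspace (wedge_V M X x0)" for v
    using deformed_Psi_eq_Psi_map[OF that] start by simp
  show "deformed_Psi (a (fst (1, v))) (b (fst (1, v))) x0 (snd (1, v)) = Phi_map v"
    if "v \<in> topspace (wedge_V M X x0)" for v
    using deformed_Psi_eq_Phi_map[OF that] finish by simp
qed (simp add: deformed_Psi_def)

theorem proposition2p3:
  fixes M :: "'m topology" and n l :: nat and x0 :: "nat \<Rightarrow> real"
  assumes "topological_manifold M n"
    and "l \<ge> 1"
    and "x0 \<in> topspace (nsphere (2 * l))"
  shows "homotopic_with (\<lambda>h. h None = {#})
           (wedge_V M (nsphere (2 * l)) x0)
           (SP (smash (wedge_V M (nsphere (2 * l)) x0) (wedge_V M (nsphere (2 * l)) x0)) None)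
           Phi_map Psi_map"
proof -
  have "1 \<le> 2 * l"
    using assms(2) by simp
  then obtain \<alpha> \<beta> :: "real \<Rightarrow> (nat \<Rightarrow> real) \<Rightarrow> nat \<Rightarrow> real" where
    "continuous_map (prod_topology (top_of_set {0..1}) (nsphere (2 * l))) (nsphere (2 * l)) (\<lambda>z. \<alpha> (fst z) (snd z))"
    "continuous_map (prod_topology (top_of_set {0..1}) (nsphere (2 * l))) (nsphere (2 * l)) (\<lambda>z. \<beta> (fst z) (snd z))"
    "\<And>x. x \<in> topspace (nsphere (2 * l)) \<Longrightarrow> \<alpha> 0 x = x \<and> \<beta> 0 x = x"
    "\<And>t. t \<in> {0..1} \<Longrightarrow> \<alpha> t x0 = x0"
    "\<And>x. x \<in> topspace (nsphere (2 * l)) \<Longrightarrow> \<alpha> 1 x = x0 \<or> \<beta> 1 x = x0"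
    using nsphere_deformations[OF assms(3)] by blast
  from homotopic_with_Psi_map_Phi_map[OF this(1,2) assms(3) openin_nsphere_delete this(3-5)]
  show ?thesis
    by (rule homotopic_with_symD)
qed

end
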